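(* Let $\mathcal{H}$ be a Hilbert space, $\mathbb{S}_{1/2}=\{z\in\mathbb{C}: 0<\mathrm{Im}\,z<1/2\}$, and let $A:\overline{\mathbb{S}_{1/2}}\to B(\mathcal{H})$ be a norm-bounded map that is continuous in the strong operator topology and analytic on $\mathbb{S}_{1/2}$. Let $A_0\in B(\mathcal{H})$ be such that $\lim_{t\to-\infty}A(t)=\lim_{t\to-\infty}A(t+\tfrac{i}{2})=A_0$ in the strong operator topology. Then for every $\psi\in\mathcal{H}$, $\lim_{t\to-\infty}\|A(t+iy)\psi-A_0\psi\|=0$ uniformly in $y\in[0,\tfrac12]$.
   Context: Analyticity of an operator-valued function may be taken in the norm, strong or weak operator topology (these are equivalent). *)

theory Defs
  imports "HOL-Analysis.Analysis"
begin

text \<open>The distribution only has real inner product spaces,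
so we add a complex scalar multiplication compatible with the real one and with the
norm. A complex normed space whose norm comes from a (real) inner product is exactly
a complex inner product space (polarization), so together with completeness this
class is the class of complex Hilbert spaces.\<close>

class complex_inner_space = real_inner +
  fixes scaleC :: "complex \<Rightarrow> 'a \<Rightarrow> 'a" (infixr \<open>*\<^sub>C\<close> 75)
  assumes scaleC_add_right: "a *\<^sub>C (x + y) = a *\<^sub>C x + a *\<^sub>C y"
    and scaleC_add_left: "(a + b) *\<^sub>C x = a *\<^sub>C x + b *\<^sub>C x"
    and scaleC_scaleC: "a *\<^sub>C (b *\<^sub>C x) = (a * b) *\<^sub>C x"
    and scaleC_one: "1 *\<^sub>C x = x"
    and scaleC_of_real: "complex_of_real r *\<^sub>C x = r *\<^sub>R x"
    and norm_scaleC: "norm (a *\<^sub>C x) = cmod a * norm x"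

class complex_hilbert_space = complex_inner_space + complete_space

definition bounded_clinear :: "('a::complex_inner_space \<Rightarrow> 'b::complex_inner_space) \<Rightarrow> bool" where
  "bounded_clinear f \<longleftrightarrow>
     (\<forall>x y. f (x + y) = f x + f y) \<and> (\<forall>c x. f (c *\<^sub>C x) = c *\<^sub>C f x) \<and>
     (\<exists>K. \<forall>x. norm (f x) \<le> norm x * K)"

definition vec_holomorphic_on :: "(complex \<Rightarrow> 'a::complex_inner_space) \<Rightarrow> complex set \<Rightarrow> bool" where
  "vec_holomorphic_on f S \<longleftrightarrow>
     (\<forall>z\<in>S. \<exists>v. (f has_derivative (\<lambda>h. h *\<^sub>C v)) (at z within S))"

definition strip_half :: "complex set" where
  "strip_half = {z. 0 < Im z \<and> Im z < 1/2}"

end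

theory Submission
  imports Defs "HOL-Complex_Analysis.Conformal_Mappings"
begin

text \<open>Fix \<open>\<psi>\<close> and put \<open>f z = A z \<psi> - A0 \<psi>\<close>. Pairing \<open>f\<close> with the unit vector along \<open>f z\<close> gives a
  bounded holomorphic scalar function \<open>F\<close> with \<open>\<bar>F z\<bar> = \<parallel>f z\<parallel>\<close> that is at most \<open>\<delta>\<close> on both boundary
  lines left of some \<open>T\<close>. Multiply \<open>F\<close> by the weight \<open>exp (\<epsilon> (w - T) - K (1 - \<i>) exp (\<pi> (w - T)))\<close>,
  which has modulus at most 1 on the half-strip left of \<open>T\<close>, at most \<open>exp (-K)\<close> on the line
  \<open>Re w = T\<close>, and tends to 0 as \<open>Re w \<rightarrow> -\<infinity>\<close>. The maximum modulus principle on a rectangle,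
  followed by \<open>\<epsilon> \<rightarrow> 0\<close>, gives \<open>\<bar>F z\<bar> \<le> \<delta> exp (2K exp (\<pi> (Re z - T)))\<close>, a bound tending to \<open>\<delta>\<close>
  as \<open>Re z \<rightarrow> -\<infinity>\<close> independently of \<open>Im z\<close>.\<close>

lemma scaleC_diff_right: "c *\<^sub>C (x - y) = c *\<^sub>C x - c *\<^sub>C (y::'a::complex_inner_space)"
  by (metis scaleC_add_right add_diff_cancel diff_add_cancel)

lemma scaleC_scaleR_commute: "c *\<^sub>C (r *\<^sub>R x) = r *\<^sub>R (c *\<^sub>C (x::'a::complex_inner_space))"
  by (metis scaleC_of_real scaleC_scaleC mult.commute)

lemma scaleC_eq_scaleR_Re_Im: "c *\<^sub>C x = Re c *\<^sub>R x + Im c *\<^sub>R (\<i> *\<^sub>C (x::'a::complex_inner_space))"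
proof -
  have "c *\<^sub>C x = (of_real (Re c) + \<i> * of_real (Im c)) *\<^sub>C x"
    by (subst complex_eq) (rule refl)
  also have "\<dots> = Re c *\<^sub>R x + Im c *\<^sub>R (\<i> *\<^sub>C x)"
    by (simp only: scaleC_add_left scaleC_scaleC[symmetric] scaleC_of_real scaleC_scaleR_commute)
  finally show ?thesis .
qed

lemma inner_scaleC_ii: "inner (\<i> *\<^sub>C x) (\<i> *\<^sub>C y) = inner x (y::'a::complex_inner_space)"
proof -
  have polar: "4 * inner a b = (norm (a + b))\<^sup>2 - (norm (a - b))\<^sup>2" for a b :: 'a
    by (simp add: power2_norm_eq_inner inner_add_left inner_add_right inner_diff_left
        inner_diff_right inner_commute)
  show ?thesis
    using polar[of "\<i> *\<^sub>C x" "\<i> *\<^sub>C y"] polar[of x y]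
    by (simp add: norm_scaleC flip: scaleC_add_right scaleC_diff_right)
qed

lemma scaleC_ii_ii: "\<i> *\<^sub>C \<i> *\<^sub>C x = - (x::'a::complex_inner_space)"
  using scaleC_of_real[of "-1" x] by (simp add: scaleC_scaleC)

lemma inner_scaleC_ii_left: "inner (\<i> *\<^sub>C x) y = - inner x (\<i> *\<^sub>C (y::'a::complex_inner_space))"
  by (metis inner_scaleC_ii scaleC_ii_ii inner_minus_left)

lemma inner_scaleC_ii_self: "inner x (\<i> *\<^sub>C (x::'a::complex_inner_space)) = 0"
  using inner_scaleC_ii_left[of x x] by (simp add: inner_commute)

text \<open>The complex inner product, recovered from the real one; linear in the first argument.\<close>
definition cinner :: "'a::complex_inner_space \<Rightarrow> 'a \<Rightarrow> complex" where
  "cinner x y = Complex (inner x y) (inner x (\<i> *\<^sub>C y))"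

lemma Re_cinner [simp]: "Re (cinner x y) = inner x y"
  by (simp add: cinner_def)

lemma cinner_scaleC_left: "cinner (c *\<^sub>C x) y = c * cinner x y"
  by (simp add: cinner_def scaleC_eq_scaleR_Re_Im[of c x] inner_add_left inner_scaleC_ii_left
      inner_scaleC_ii scaleC_ii_ii complex_eq_iff algebra_simps)

lemma cinner_scaleR_self: "cinner x (r *\<^sub>R x) = of_real (r * (norm x)\<^sup>2)"
  by (simp add: cinner_def complex_eq_iff scaleC_scaleR_commute inner_scaleC_ii_self
      power2_norm_eq_inner)

lemma norm_cinner_le: "cmod (cinner x y) \<le> norm x * norm y"
proof -
  define c where "c = cnj (cinner x y)"
  have "(cmod (cinner x y))\<^sup>2 = Re (cinner (c *\<^sub>C x) y)"
    by (simp only: c_def cinner_scaleC_left cmod_power2) (simp add: power2_eq_square)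
  also have "\<dots> \<le> norm (c *\<^sub>C x) * norm y"
    by (simp add: norm_cauchy_schwarz)
  also have "\<dots> = cmod (cinner x y) * (norm x * norm y)"
    by (simp add: norm_scaleC c_def)
  finally show ?thesis
    by (metis mult_le_cancel_left_pos norm_ge_zero order_le_less power2_eq_square
        mult_nonneg_nonneg)
qed

lemma bounded_linear_cinner_left: "bounded_linear (\<lambda>x. cinner x y)"
proof -
  have "(\<lambda>x. cinner x y) = (\<lambda>x. of_real (inner x y) + \<i> * of_real (inner x (\<i> *\<^sub>C y)))"
    by (auto simp: cinner_def complex_eq_iff)
  then show ?thesis
    by (auto intro!: bounded_linear_add bounded_linear_compose[OF bounded_linear_mult_right]
        bounded_linear_compose[OF bounded_linear_of_real] bounded_linear_inner_left)
qed

lemma holomorphic_on_cinner_left: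
  assumes "vec_holomorphic_on f S"
  shows "(\<lambda>z. cinner (f z) y) holomorphic_on S"
  unfolding holomorphic_on_def field_differentiable_def has_field_derivative_def
proof
  fix z assume "z \<in> S"
  then obtain v where "(f has_derivative (\<lambda>h. h *\<^sub>C v)) (at z within S)"
    using assms unfolding vec_holomorphic_on_def by blast
  from bounded_linear.has_derivative[OF bounded_linear_cinner_left[of y] this]
  show "\<exists>c. ((\<lambda>z. cinner (f z) y) has_derivative (*) c) (at z within S)"
    by (metis (no_types, lifting) cinner_scaleC_left ext mult.commute)
qed

lemma vec_holomorphic_on_diff_const:
  assumes "vec_holomorphic_on f S"
  shows "vec_holomorphic_on (\<lambda>z. f z - c) S"
  unfolding vec_holomorphic_on_def
proof
  fix z
  assume "z \<in> S"
  then obtain v where "(f has_derivative (\<lambda>h. h *\<^sub>C v)) (at z within S)"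
    using assms unfolding vec_holomorphic_on_def by blast
  then have "((\<lambda>z. f z - c) has_derivative (\<lambda>h. h *\<^sub>C v - 0)) (at z within S)"
    by (intro has_derivative_diff has_derivative_const)
  then show "\<exists>v. ((\<lambda>z. f z - c) has_derivative (\<lambda>h. h *\<^sub>C v)) (at z within S)"
    by auto
qed

lemma closure_strip_half: "closure strip_half = {z. 0 \<le> Im z \<and> Im z \<le> 1/2}"
proof -
  have "\<i>/4 \<in> rel_interior {z. Im z > 0} \<inter> rel_interior {z. Im z < 1/2}"
    unfolding rel_interior_open[OF open_halfspace_Im_gt] rel_interior_open[OF open_halfspace_Im_lt]
    by simp
  then have "closure strip_half = closure {z. Im z > 0} \<inter> closure {z. Im z < 1/2}"
    unfolding strip_half_def Collect_conj_eq
    by (intro closure_Int_convex convex_halfspace_Im_gt convex_halfspace_Im_lt) blast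
  moreover have "closure {z. Im z > 0} = {z. 0 \<le> Im z}"
    using closure_halfspace_gt[of \<i> 0] by simp
  moreover have "closure {z. Im z < 1/2} = {z. Im z \<le> 1/2}"
    using closure_halfspace_lt[of \<i> "1/2"] by simp
  ultimately show ?thesis
    by auto
qed

lemma cos_plus_sin_bounds:
  assumes "0 \<le> y" "y \<le> 1/2"
  shows "1 \<le> cos (pi * y) + sin (pi * y)" "cos (pi * y) + sin (pi * y) \<le> 2"
proof -
  have "0 \<le> pi * y" "pi * y \<le> pi / 2"
    using assms by auto
  then have "0 \<le> cos (pi * y)"
    using pi_gt_zero by (intro cos_ge_zero) linarith+
  moreover have "0 \<le> sin (pi * y)"
    using assms by (intro sin_ge_zero) auto
  ultimately have "1 \<le> (cos (pi * y) + sin (pi * y))\<^sup>2"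
    using sin_cos_squared_add[of "pi * y"] by (simp add: power2_sum)
  then show "1 \<le> cos (pi * y) + sin (pi * y)"
    using \<open>0 \<le> cos (pi * y)\<close> \<open>0 \<le> sin (pi * y)\<close> by (metis power2_le_imp_le add_nonneg_nonneg one_power2)
  show "cos (pi * y) + sin (pi * y) \<le> 2"
    using cos_le_one[of "pi * y"] sin_le_one[of "pi * y"] by linarith
qed

text \<open>On the closed strip, \<open>Re ((1 - \<i>) * exp (pi * w)) = exp (pi * Re w) * (cos (pi * Im w) + sin (pi * Im w))\<close>
  lies between \<open>exp (pi * Re w)\<close> and twice that, so the second factor of the weight decays
  doubly exponentially as \<open>Re z\<close> grows; the first factor decays as \<open>Re z \<rightarrow> -\<infinity>\<close>.\<close>
definition strip_weight :: "real \<Rightarrow> real \<Rightarrow> real \<Rightarrow> complex \<Rightarrow> complex" where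
  "strip_weight \<epsilon> K T z =
     exp (of_real \<epsilon> * (z - of_real T) - of_real K * (1 - \<i>) * exp (of_real pi * (z - of_real T)))"

lemma norm_strip_weight:
  "cmod (strip_weight \<epsilon> K T z) =
     exp (\<epsilon> * (Re z - T) - K * exp (pi * (Re z - T)) * (cos (pi * Im z) + sin (pi * Im z)))"
  by (simp add: strip_weight_def Re_exp Im_exp algebra_simps)

lemma norm_strip_weight_le:
  assumes "0 \<le> K" "z \<in> closure strip_half"
  shows "cmod (strip_weight \<epsilon> K T z) \<le> exp (\<epsilon> * (Re z - T) - K * exp (pi * (Re z - T)))"
proof -
  have "K * exp (pi * (Re z - T)) * 1 \<le> K * exp (pi * (Re z - T)) * (cos (pi * Im z) + sin (pi * Im z))"
    using assms cos_plus_sin_bounds(1)[of "Im z"] by (intro mult_left_mono) (auto simp: closure_strip_half)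
  then show ?thesis
    by (simp add: norm_strip_weight)
qed

lemma norm_strip_weight_ge:
  assumes "0 \<le> K" "z \<in> closure strip_half"
  shows "exp (\<epsilon> * (Re z - T) - 2 * K * exp (pi * (Re z - T))) \<le> cmod (strip_weight \<epsilon> K T z)"
proof -
  have "K * exp (pi * (Re z - T)) * (cos (pi * Im z) + sin (pi * Im z)) \<le> K * exp (pi * (Re z - T)) * 2"
    using assms cos_plus_sin_bounds(2)[of "Im z"] by (intro mult_left_mono) (auto simp: closure_strip_half)
  then show ?thesis
    by (simp add: norm_strip_weight)
qed

lemma norm_strip_weight_le_1:
  assumes "0 \<le> K" "0 \<le> \<epsilon>" "z \<in> closure strip_half" "Re z \<le> T"
  shows "cmod (strip_weight \<epsilon> K T z) \<le> 1"
proof -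
  have "\<epsilon> * (Re z - T) \<le> 0" "0 \<le> K * exp (pi * (Re z - T))"
    using assms by (simp_all add: mult_nonneg_nonpos)
  then show ?thesis
    using norm_strip_weight_le[OF assms(1,3), of \<epsilon> T] by (simp add: order_trans)
qed

lemma norm_strip_weight_le_exp_neg:
  assumes "0 \<le> K" "0 < \<epsilon>" "z \<in> closure strip_half" "Re z = T \<or> Re z \<le> T - K / \<epsilon>"
  shows "cmod (strip_weight \<epsilon> K T z) \<le> exp (-K)"
proof -
  have "Re z \<le> T - K / \<epsilon> \<Longrightarrow> \<epsilon> * (Re z - T) \<le> -K"
    using assms(2) by (simp add: field_simps)
  moreover have "0 \<le> K * exp (pi * (Re z - T))"
    using assms(1) by simp
  ultimately have "\<epsilon> * (Re z - T) - K * exp (pi * (Re z - T)) \<le> -K"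
    using assms(4) by auto
  then show ?thesis
    using norm_strip_weight_le[OF assms(1,3), of \<epsilon> T] by (meson exp_le_cancel_iff order_trans)
qed

text \<open>Maximum modulus on the rectangle \<open>[S0, T] \<times> [0, 1/2]\<close>, where \<open>S0 \<le> T - K / \<epsilon>\<close> makes the
  weight at most \<open>exp (-K)\<close> on the left side as it is on the right side.\<close>
lemma norm_strip_weight_mult_le:
  fixes F :: "complex \<Rightarrow> complex"
  assumes hol: "F holomorphic_on strip_half"
    and cont: "continuous_on (closure strip_half) F"
    and bounded: "\<And>z. z \<in> closure strip_half \<Longrightarrow> cmod (F z) \<le> M"
    and bottom: "\<And>t. t \<le> T \<Longrightarrow> cmod (F (of_real t)) \<le> \<delta>"
    and top: "\<And>t. t \<le> T \<Longrightarrow> cmod (F (of_real t + \<i>/2)) \<le> \<delta>"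
    and K: "0 \<le> K" "M * exp (-K) \<le> \<delta>"
    and \<epsilon>: "0 < \<epsilon>"
    and z: "z \<in> closure strip_half" "Re z \<le> T"
  shows "cmod (strip_weight \<epsilon> K T z * F z) \<le> \<delta>"
proof -
  define S0 where "S0 = min (Re z) (T - K / \<epsilon>)"
  define a b where "a = Complex S0 0" and "b = Complex T (1/2)"
  have cbox_sub: "cbox a b \<subseteq> closure strip_half"
    by (auto simp: closure_strip_half in_cbox_complex_iff a_def b_def)
  show ?thesis
  proof (rule maximum_modulus_frontier[of "\<lambda>w. strip_weight \<epsilon> K T w * F w" "cbox a b"])
    show "(\<lambda>w. strip_weight \<epsilon> K T w * F w) holomorphic_on interior (cbox a b)"
      using hol by (auto simp: strip_weight_def interior_cbox a_def b_def in_box_complex_iff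
          strip_half_def intro!: holomorphic_intros elim!: holomorphic_on_subset)
    show "continuous_on (closure (cbox a b)) (\<lambda>w. strip_weight \<epsilon> K T w * F w)"
      unfolding closure_cbox strip_weight_def
      by (intro continuous_intros continuous_on_subset[OF cont cbox_sub])
    show "bounded (cbox a b)" "z \<in> cbox a b"
      using z by (auto simp: closure_strip_half in_cbox_complex_iff a_def b_def S0_def)
    fix w assume "w \<in> frontier (cbox a b)"
    then have w: "w \<in> closure strip_half" "Re w \<le> T"
      and sides: "w = of_real (Re w) \<or> w = of_real (Re w) + \<i>/2 \<or> Re w = T \<or> Re w \<le> T - K / \<epsilon>"
      using cbox_sub
      by (auto simp: frontier_cbox in_cbox_complex_iff in_box_complex_iff a_def b_def S0_def
          complex_eq_iff)
    then consider "cmod (F w) \<le> \<delta>" | "cmod (strip_weight \<epsilon> K T w) \<le> exp (-K)"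
      using bottom top norm_strip_weight_le_exp_neg[OF K(1) \<epsilon>] by metis
    then have "cmod (strip_weight \<epsilon> K T w) * cmod (F w) \<le> \<delta>"
    proof cases
      case 1
      then have "cmod (strip_weight \<epsilon> K T w) * cmod (F w) \<le> 1 * \<delta>"
        using norm_strip_weight_le_1[OF K(1) _ w] \<epsilon> by (intro mult_mono) auto
      then show ?thesis
        by simp
    next
      case 2
      then have "cmod (strip_weight \<epsilon> K T w) * cmod (F w) \<le> exp (-K) * M"
        using bounded[OF w(1)] by (intro mult_mono) auto
      then show ?thesis
        using K(2) by (simp add: mult.commute)
    qed
    then show "cmod (strip_weight \<epsilon> K T w * F w) \<le> \<delta>"
      by (simp add: norm_mult)
  qed
qed

text \<open>Let \<open>\<epsilon> \<rightarrow> 0\<close> in the weighted bound with \<open>K = M / \<delta> + 1\<close>.\<close>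
lemma strip_phragmen_lindelof:
  fixes F :: "complex \<Rightarrow> complex"
  assumes hol: "F holomorphic_on strip_half"
    and cont: "continuous_on (closure strip_half) F"
    and bounded: "\<And>z. z \<in> closure strip_half \<Longrightarrow> cmod (F z) \<le> M"
    and bottom: "\<And>t. t \<le> T \<Longrightarrow> cmod (F (of_real t)) \<le> \<delta>"
    and top: "\<And>t. t \<le> T \<Longrightarrow> cmod (F (of_real t + \<i>/2)) \<le> \<delta>"
    and \<delta>: "0 < \<delta>"
    and z: "z \<in> closure strip_half" "Re z \<le> T"
  shows "cmod (F z) \<le> \<delta> * exp (2 * (M / \<delta> + 1) * exp (pi * (Re z - T)))"
proof -
  define K where "K = M / \<delta> + 1"
  define B where "B = \<delta> * exp (2 * K * exp (pi * (Re z - T)))"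
  have "0 \<le> M"
    using bounded[of 0] by (simp add: closure_strip_half) (meson norm_ge_zero order_trans)
  then have K: "0 \<le> K" "M * exp (-K) \<le> \<delta>"
    using \<delta> exp_ge_add_one_self[of K]
    by (auto simp: K_def exp_minus field_simps)
  have bound: "cmod (F z) \<le> B * exp (\<epsilon> * (T - Re z))" if "0 < \<epsilon>" for \<epsilon>
  proof -
    have "exp (\<epsilon> * (Re z - T) - 2 * K * exp (pi * (Re z - T))) * cmod (F z) \<le> \<delta>"
      using norm_strip_weight_mult_le[OF hol cont bounded bottom top K that z]
        norm_strip_weight_ge[OF K(1) z(1), of \<epsilon> T]
      by (metis norm_mult mult_right_mono norm_ge_zero order_trans)
    then have "cmod (F z) \<le> \<delta> / exp (\<epsilon> * (Re z - T) - 2 * K * exp (pi * (Re z - T)))"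
      by (simp add: pos_le_divide_eq mult.commute)
    also have "\<dots> = B * exp (\<epsilon> * (T - Re z))"
      by (simp add: B_def exp_diff exp_minus_inverse field_simps flip: exp_add)
    finally show ?thesis .
  qed
  have "((\<lambda>\<epsilon>. B * exp (\<epsilon> * (T - Re z))) \<longlongrightarrow> B * exp (0 * (T - Re z))) (at_right 0)"
    by (intro tendsto_intros)
  moreover have "\<forall>\<^sub>F \<epsilon> in at_right 0. cmod (F z) \<le> B * exp (\<epsilon> * (T - Re z))"
    using eventually_at_right_less by (rule eventually_mono) (rule bound)
  ultimately have "cmod (F z) \<le> B"
    by (auto intro: tendsto_lowerbound)
  then show ?thesis
    by (simp add: B_def K_def)
qed

lemma strip_phragmen_lindelof_vector:
  fixes f :: "complex \<Rightarrow> 'a::complex_inner_space"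
  assumes hol: "vec_holomorphic_on f strip_half"
    and cont: "continuous_on (closure strip_half) f"
    and bounded: "\<And>z. z \<in> closure strip_half \<Longrightarrow> norm (f z) \<le> M"
    and bottom: "\<And>t. t \<le> T \<Longrightarrow> norm (f (of_real t)) \<le> \<delta>"
    and top: "\<And>t. t \<le> T \<Longrightarrow> norm (f (of_real t + \<i>/2)) \<le> \<delta>"
    and \<delta>: "0 < \<delta>"
    and z: "z \<in> closure strip_half" "Re z \<le> T"
  shows "norm (f z) \<le> \<delta> * exp (2 * (M / \<delta> + 1) * exp (pi * (Re z - T)))"
proof -
  \<comment> \<open>pairing with \<open>u\<close> is a norming functional for \<open>f z\<close>\<close>
  define u where "u = inverse (norm (f z)) *\<^sub>R f z"
  have "norm u \<le> 1"
    by (cases "f z = 0") (auto simp: u_def)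
  then have functional_le: "cmod (cinner (f w) u) \<le> norm (f w)" for w
    using norm_cinner_le[of "f w" u] by (meson mult_left_le norm_ge_zero order_trans)
  have "cinner (f z) u = of_real (inverse (norm (f z)) * (norm (f z))\<^sup>2)"
    unfolding u_def by (rule cinner_scaleR_self)
  moreover have "inverse (norm (f z)) * (norm (f z))\<^sup>2 = norm (f z)"
    by (cases "f z = 0") (simp_all add: power2_eq_square)
  ultimately have "cinner (f z) u = of_real (norm (f z))"
    by simp
  then have "norm (f z) = cmod (cinner (f z) u)"
    by simp
  also have "\<dots> \<le> \<delta> * exp (2 * (M / \<delta> + 1) * exp (pi * (Re z - T)))"
  proof (rule strip_phragmen_lindelof[OF _ _ _ _ _ \<delta> z])
    show "(\<lambda>w. cinner (f w) u) holomorphic_on strip_half"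
      using hol by (rule holomorphic_on_cinner_left)
    show "continuous_on (closure strip_half) (\<lambda>w. cinner (f w) u)"
      using bounded_linear.continuous_on[OF bounded_linear_cinner_left cont] .
  qed (use functional_le bounded bottom top in \<open>blast intro: order_trans\<close>)+
  finally show ?thesis .
qed

lemma strip_uniform_limit:
  fixes f :: "complex \<Rightarrow> 'a::complex_inner_space"
  assumes hol: "vec_holomorphic_on f strip_half"
    and cont: "continuous_on (closure strip_half) f"
    and bounded: "\<And>z. z \<in> closure strip_half \<Longrightarrow> norm (f z) \<le> M"
    and bottom: "((\<lambda>t. f (of_real t)) \<longlongrightarrow> L) at_bot"
    and top: "((\<lambda>t. f (of_real t + \<i>/2)) \<longlongrightarrow> L) at_bot"
  shows "uniform_limit {0..1/2} (\<lambda>t y. f (Complex t y)) (\<lambda>y. L) at_bot"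
  unfolding uniform_limit_iff
proof (intro allI impI)
  fix e :: real
  assume "0 < e"
  define \<delta> where "\<delta> = e / 2"
  define K where "K = 2 * ((M + norm L) / \<delta> + 1)"
  have \<delta>: "0 < \<delta>" "\<delta> < e"
    using \<open>0 < e\<close> by (auto simp: \<delta>_def)
  have "\<forall>\<^sub>F t in at_bot. dist (f (of_real t)) L < \<delta> \<and> dist (f (of_real t + \<i>/2)) L < \<delta>"
    using bottom top \<delta>(1) by (auto simp: tendsto_iff intro: eventually_conj)
  then obtain T where T: "\<And>t. t \<le> T \<Longrightarrow> dist (f (of_real t)) L < \<delta> \<and> dist (f (of_real t + \<i>/2)) L < \<delta>"
    by (auto simp: eventually_at_bot_linorder)
  have near: "dist (f z) L \<le> \<delta> * exp (K * exp (pi * (Re z - T)))"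
    if "z \<in> closure strip_half" "Re z \<le> T" for z
  proof -
    have bounded_diff: "norm (f w - L) \<le> M + norm L" if "w \<in> closure strip_half" for w
      using bounded[OF that] norm_triangle_ineq4[of "f w" L] by linarith
    have "norm (f z - L) \<le> \<delta> * exp (2 * ((M + norm L) / \<delta> + 1) * exp (pi * (Re z - T)))"
    proof (rule strip_phragmen_lindelof_vector[OF _ _ bounded_diff _ _ \<delta>(1) that])
      show "vec_holomorphic_on (\<lambda>w. f w - L) strip_half"
        using hol by (rule vec_holomorphic_on_diff_const)
      show "continuous_on (closure strip_half) (\<lambda>w. f w - L)"
        using cont by (intro continuous_intros)
    qed (use T in \<open>auto simp: dist_norm less_imp_le\<close>)
    then show ?thesis
      by (simp add: K_def dist_norm)
  qed
  have "filterlim (\<lambda>t. pi * (t - T)) at_bot at_bot"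
    unfolding filterlim_at_bot eventually_at_bot_linorder
    by (metis (no_types) pi_gt_zero mult.commute pos_le_divide_eq diff_le_eq)
  then have "((\<lambda>t. exp (pi * (t - T))) \<longlongrightarrow> 0) at_bot"
    by (rule filterlim_compose[OF exp_at_bot])
  then have "((\<lambda>t. \<delta> * exp (K * exp (pi * (t - T)))) \<longlongrightarrow> \<delta> * exp (K * 0)) at_bot"
    by (intro tendsto_intros)
  then have "\<forall>\<^sub>F t in at_bot. \<delta> * exp (K * exp (pi * (t - T))) < e"
    using \<delta>(2) by (auto dest: order_tendstoD)
  then show "\<forall>\<^sub>F t in at_bot. \<forall>y\<in>{0..1/2}. dist (f (Complex t y)) L < e"
    using eventually_le_at_bot[of T]
  proof eventually_elim
    case (elim t)
    show ?case
    proof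
      fix y :: real
      assume "y \<in> {0..1/2}"
      then have "dist (f (Complex t y)) L \<le> \<delta> * exp (K * exp (pi * (t - T)))"
        using near[of "Complex t y"] elim(2) by (simp add: closure_strip_half)
      then show "dist (f (Complex t y)) L < e"
        using elim(1) by linarith
    qed
  qed
qed

theorem mainTheorem4:
  fixes A :: "complex \<Rightarrow> 'h::complex_hilbert_space \<Rightarrow> 'h"
    and A0 :: "'h \<Rightarrow> 'h"
  assumes bounded_ops: "\<forall>z\<in>closure strip_half. bounded_clinear (A z)"
    and norm_bounded: "\<exists>M. \<forall>z\<in>closure strip_half. \<forall>x. norm (A z x) \<le> M * norm x"
    and strongly_continuous: "\<forall>x. continuous_on (closure strip_half) (\<lambda>z. A z x)"
    and analytic: "\<forall>x. vec_holomorphic_on (\<lambda>z. A z x) strip_half"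
    and A0_op: "bounded_clinear A0"
    and lim_bottom: "\<forall>x. ((\<lambda>t. A (complex_of_real t) x) \<longlongrightarrow> A0 x) at_bot"
    and lim_top: "\<forall>x. ((\<lambda>t. A (complex_of_real t + \<i> / 2) x) \<longlongrightarrow> A0 x) at_bot"
  shows "\<forall>\<psi>. uniform_limit {0..1/2} (\<lambda>t y. A (Complex t y) \<psi>) (\<lambda>y. A0 \<psi>) at_bot"
proof
  fix \<psi> :: 'h
  obtain M where M: "\<And>z x. z \<in> closure strip_half \<Longrightarrow> norm (A z x) \<le> M * norm x"
    using norm_bounded by blast
  show "uniform_limit {0..1/2} (\<lambda>t y. A (Complex t y) \<psi>) (\<lambda>y. A0 \<psi>) at_bot"
    using analytic strongly_continuous M lim_bottom lim_top
    by (intro strip_uniform_limit[where M = "M * norm \<psi>"]) auto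
qed

end
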